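(* Let $A$ be an $n\times n$ irreducible doubly stochastic matrix ($n\ge2$). Then \[ \mu(A)\ge1-2\cdot\phi(A). \]
   Context: For nonempty $S\subseteq[n]$, $\mathbf 1_S$ is its indicator vector and $\mathbf 1'_S=\mathbf 1_S/|S|$. Define $\mu_S(A)=\frac12\|A\mathbf 1'_S-A\mathbf 1'_{\overline S}\|_1$ and $\mu(A)=\max_{S:\,1\le|S|\le n/2}\mu_S(A)$. Edge expansion: $\phi(A)=\min_{S:\,1\le|S|\le n/2}\frac1{|S|}\sum_{i\in S,j\notin S}A_{i,j}$. *)

theory Defs
  imports "HOL-Analysis.Analysis"
begin

text \<open>n x n real matrices are represented as functions nat => nat => real,
  with indices ranging over {0..<n} (the paper's [n]).\<close>

definition doubly_stochastic :: "nat \<Rightarrow> (nat \<Rightarrow> nat \<Rightarrow> real) \<Rightarrow> bool" where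
  "doubly_stochastic n A \<longleftrightarrow>
     (\<forall>i<n. \<forall>j<n. A i j \<ge> 0) \<and>
     (\<forall>i<n. (\<Sum>j<n. A i j) = 1) \<and>
     (\<forall>j<n. (\<Sum>i<n. A i j) = 1)"

text \<open>Irreducible: there is no partition of the index set into a nonempty proper
  subset S and its complement such that the block A[S, complement S] vanishes
  (equivalently, A cannot be permuted into block upper triangular form).\<close>
definition irreducible_mat :: "nat \<Rightarrow> (nat \<Rightarrow> nat \<Rightarrow> real) \<Rightarrow> bool" where
  "irreducible_mat n A \<longleftrightarrow>
     (\<forall>S. S \<subseteq> {..<n} \<and> S \<noteq> {} \<and> S \<noteq> {..<n} \<longrightarrow>
        (\<exists>i\<in>S. \<exists>j\<in>{..<n} - S. A i j \<noteq> 0))"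

definition ind_norm :: "nat set \<Rightarrow> nat \<Rightarrow> real" where
  "ind_norm S j = (if j \<in> S then 1 / real (card S) else 0)"

definition mat_vec :: "nat \<Rightarrow> (nat \<Rightarrow> nat \<Rightarrow> real) \<Rightarrow> (nat \<Rightarrow> real) \<Rightarrow> nat \<Rightarrow> real" where
  "mat_vec n A x i = (\<Sum>j<n. A i j * x j)"

definition mu_S :: "nat \<Rightarrow> (nat \<Rightarrow> nat \<Rightarrow> real) \<Rightarrow> nat set \<Rightarrow> real" where
  "mu_S n A S = (1/2) * (\<Sum>i<n. \<bar>mat_vec n A (ind_norm S) i - mat_vec n A (ind_norm ({..<n} - S)) i\<bar>)"

definition admissible_cuts :: "nat \<Rightarrow> nat set set" where
  "admissible_cuts n = {S. S \<subseteq> {..<n} \<and> 1 \<le> card S \<and> 2 * card S \<le> n}"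

definition mu :: "nat \<Rightarrow> (nat \<Rightarrow> nat \<Rightarrow> real) \<Rightarrow> real" where
  "mu n A = Max ((mu_S n A) ` admissible_cuts n)"

definition edge_expansion :: "nat \<Rightarrow> (nat \<Rightarrow> nat \<Rightarrow> real) \<Rightarrow> real" where
  "edge_expansion n A = Min ((\<lambda>S. (\<Sum>i\<in>S. \<Sum>j\<in>{..<n} - S. A i j) / real (card S)) ` admissible_cuts n)"

end

theory Submission
  imports Defs
begin

text \<open>Fix a cut \<open>S\<close> with complement \<open>T\<close> and let \<open>e\<close> be the total weight of the entries
  of \<open>A\<close> from \<open>S\<close> to \<open>T\<close>. Since \<open>A\<close> is doubly stochastic, the weight from \<open>T\<close> to \<open>S\<close> is
  also \<open>e\<close>, so \<open>v = A 1'_S - A 1'_T\<close> has entry sum \<open>1 - e/|S| - e/|T|\<close> over \<open>S\<close> and the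
  negative of that over \<open>T\<close>. Hence \<open>\<mu>_S(A) = \<parallel>v\<parallel>\<^sub>1 / 2 \<ge> 1 - e/|S| - e/|T|\<close>, which is at
  least \<open>1 - 2e/|S|\<close> when \<open>|S| \<le> |T|\<close>; taking \<open>S\<close> to attain \<open>\<phi>(A)\<close> gives the claim.\<close>

lemma mat_vec_ind_norm:
  assumes "X \<subseteq> {..<n}"
  shows "mat_vec n A (ind_norm X) i = (\<Sum>j\<in>X. A i j) / real (card X)"
proof -
  have "mat_vec n A (ind_norm X) i = (\<Sum>j\<in>{..<n} \<inter> X. A i j / real (card X))"
    unfolding mat_vec_def ind_norm_def sum.inter_restrict[OF finite_lessThan]
    by (intro sum.cong) auto
  also have "{..<n} \<inter> X = X"
    using assms by auto
  finally show ?thesis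
    by (simp add: sum_divide_distrib)
qed

lemma sum_diff_le_sum_abs_Un:
  fixes f :: "'a \<Rightarrow> real"
  assumes "finite S" "finite T" "S \<inter> T = {}"
  shows "(\<Sum>i\<in>S. f i) - (\<Sum>i\<in>T. f i) \<le> (\<Sum>i\<in>S \<union> T. \<bar>f i\<bar>)"
proof -
  have "(\<Sum>i\<in>S. f i) \<le> (\<Sum>i\<in>S. \<bar>f i\<bar>)" and "(\<Sum>i\<in>T. - f i) \<le> (\<Sum>i\<in>T. \<bar>f i\<bar>)"
    by (intro sum_mono; simp)+
  then show ?thesis
    using sum.union_disjoint[OF assms, of "\<lambda>i. \<bar>f i\<bar>"] by (simp add: sum_negf)
qed

lemma doubly_stochastic_row_split:
  assumes "doubly_stochastic n A" "S \<subseteq> {..<n}" "i < n"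
  shows "(\<Sum>j\<in>S. A i j) + (\<Sum>j\<in>{..<n} - S. A i j) = 1"
  using assms sum.subset_diff[OF assms(2) finite_lessThan, of "A i"]
  by (simp add: doubly_stochastic_def)

lemma doubly_stochastic_col_split:
  assumes "doubly_stochastic n A" "S \<subseteq> {..<n}" "j < n"
  shows "(\<Sum>i\<in>S. A i j) + (\<Sum>i\<in>{..<n} - S. A i j) = 1"
  using assms sum.subset_diff[OF assms(2) finite_lessThan, of "\<lambda>i. A i j"]
  by (simp add: doubly_stochastic_def)

lemma doubly_stochastic_cut_balanced:
  assumes ds: "doubly_stochastic n A" and S: "S \<subseteq> {..<n}"
  shows "(\<Sum>i\<in>{..<n} - S. \<Sum>j\<in>S. A i j) = (\<Sum>i\<in>S. \<Sum>j\<in>{..<n} - S. A i j)"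
proof -
  have "(\<Sum>i\<in>{..<n} - S. \<Sum>j\<in>S. A i j) = (\<Sum>j\<in>S. \<Sum>i\<in>{..<n} - S. A i j)"
    by (rule sum.swap)
  also have "\<dots> = (\<Sum>j\<in>S. 1 - (\<Sum>i\<in>S. A i j))"
    using doubly_stochastic_col_split[OF ds S] S by (intro sum.cong) (auto simp: algebra_simps)
  also have "\<dots> = (\<Sum>i\<in>S. 1 - (\<Sum>j\<in>S. A i j))"
    unfolding sum_subtractf by (subst sum.swap) (rule refl)
  also have "\<dots> = (\<Sum>i\<in>S. \<Sum>j\<in>{..<n} - S. A i j)"
    using doubly_stochastic_row_split[OF ds S] S by (intro sum.cong) (auto simp: algebra_simps)
  finally show ?thesis .
qed

lemma mu_S_ge_cut_bound:
  assumes ds: "doubly_stochastic n A" and S: "S \<subseteq> {..<n}"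
  defines "T \<equiv> {..<n} - S"
    and "e \<equiv> \<Sum>i\<in>S. \<Sum>j\<in>{..<n} - S. A i j"
  assumes "S \<noteq> {}" "T \<noteq> {}"
  shows "mu_S n A S \<ge> 1 - e / real (card S) - e / real (card T)"
proof -
  define s where "s = real (card S)"
  define t where "t = real (card T)"
  have fin: "finite S" "finite T"
    using S finite_subset unfolding T_def by auto
  then have "s > 0" "t > 0"
    using assms(5,6) by (auto simp: s_def t_def)
  have disj: "S \<inter> T = {}" and un: "S \<union> T = {..<n}"
    using S by (auto simp: T_def)
  define r where "r i = (\<Sum>j\<in>S. A i j)" for i
  define q where "q i = (\<Sum>j\<in>T. A i j)" for i
  define v where "v i = r i / s - q i / t" for i
  have e_q: "(\<Sum>i\<in>S. q i) = e"
    by (simp add: e_def q_def T_def)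
  have rq: "r i = 1 - q i" if "i < n" for i
    using doubly_stochastic_row_split[OF ds S that] by (simp add: r_def q_def T_def)
  have sum_S_r: "(\<Sum>i\<in>S. r i) = s - e"
  proof -
    have "(\<Sum>i\<in>S. r i) = (\<Sum>i\<in>S. 1 - q i)"
      using rq S by (intro sum.cong) auto
    then show ?thesis
      by (simp add: sum_subtractf s_def e_q)
  qed
  have sum_T_r: "(\<Sum>i\<in>T. r i) = e"
    using doubly_stochastic_cut_balanced[OF ds S] by (simp add: r_def e_def T_def)
  have sum_T_q: "(\<Sum>i\<in>T. q i) = t - e"
  proof -
    have "(\<Sum>i\<in>T. q i) = (\<Sum>i\<in>T. 1 - r i)"
      using rq by (intro sum.cong) (auto simp: T_def)
    then show ?thesis
      using sum_T_r by (simp add: sum_subtractf t_def)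
  qed
  have "mu_S n A S = (1/2) * (\<Sum>i<n. \<bar>v i\<bar>)"
    unfolding mu_S_def mat_vec_ind_norm[OF S] mat_vec_ind_norm[OF Diff_subset]
    by (simp add: v_def r_def q_def s_def t_def T_def)
  also have "\<dots> \<ge> (1/2) * ((\<Sum>i\<in>S. v i) - (\<Sum>i\<in>T. v i))"
    using sum_diff_le_sum_abs_Un[OF fin disj, of v] un by simp
  also have "(\<Sum>i\<in>S. v i) - (\<Sum>i\<in>T. v i) = (s - e) / s - e / t - (e / s - (t - e) / t)"
    unfolding v_def
    by (simp add: sum_subtractf sum_divide_distrib[symmetric] sum_S_r sum_T_r sum_T_q e_q)
  also have "(1/2) * \<dots> = 1 - e / s - e / t"
    using \<open>s > 0\<close> \<open>t > 0\<close> by (simp add: field_simps)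
  finally show ?thesis
    by (simp add: s_def t_def)
qed

lemma mu_S_ge_expansion_ratio:
  assumes ds: "doubly_stochastic n A" and "S \<in> admissible_cuts n"
  shows "mu_S n A S \<ge> 1 - 2 * ((\<Sum>i\<in>S. \<Sum>j\<in>{..<n} - S. A i j) / real (card S))"
proof -
  define e where "e = (\<Sum>i\<in>S. \<Sum>j\<in>{..<n} - S. A i j)"
  have S: "S \<subseteq> {..<n}" "1 \<le> card S" "2 * card S \<le> n"
    using assms(2) by (auto simp: admissible_cuts_def)
  have card_T: "card ({..<n} - S) = n - card S"
    using S(1) by (simp add: card_Diff_subset finite_subset)
  then have "card S \<le> card ({..<n} - S)" "S \<noteq> {}" "{..<n} - S \<noteq> {}"
    using S by auto
  have "e \<ge> 0"
    unfolding e_def using ds S(1) by (intro sum_nonneg) (auto simp: doubly_stochastic_def)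
  then have "e / real (card ({..<n} - S)) \<le> e / real (card S)"
    using \<open>card S \<le> card ({..<n} - S)\<close> S(2) by (intro divide_left_mono) auto
  moreover have "mu_S n A S \<ge> 1 - e / real (card S) - e / real (card ({..<n} - S))"
    unfolding e_def using mu_S_ge_cut_bound[OF ds S(1)] \<open>S \<noteq> {}\<close> \<open>{..<n} - S \<noteq> {}\<close> .
  ultimately show ?thesis
    unfolding e_def by linarith
qed

theorem lemma5p42:
  fixes n :: nat and A :: "nat \<Rightarrow> nat \<Rightarrow> real"
  assumes "n \<ge> 2"
    and "doubly_stochastic n A"
    and "irreducible_mat n A"
  shows "mu n A \<ge> 1 - 2 * edge_expansion n A"
proof -
  define ratio where "ratio S = (\<Sum>i\<in>S. \<Sum>j\<in>{..<n} - S. A i j) / real (card S)" for S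
  have fin: "finite (admissible_cuts n)"
    by (rule finite_subset[of _ "Pow {..<n}"]) (auto simp: admissible_cuts_def)
  have "{0} \<in> admissible_cuts n"
    using assms(1) by (auto simp: admissible_cuts_def)
  then have "edge_expansion n A \<in> ratio ` admissible_cuts n"
    unfolding edge_expansion_def ratio_def[abs_def] using fin by (intro Min_in) auto
  then obtain S where S: "S \<in> admissible_cuts n" and "edge_expansion n A = ratio S"
    by auto
  moreover have "mu_S n A S \<le> mu n A"
    unfolding mu_def using fin S by (intro Max_ge) auto
  moreover have "mu_S n A S \<ge> 1 - 2 * ratio S"
    unfolding ratio_def using mu_S_ge_expansion_ratio[OF assms(2) S] .
  ultimately show ?thesis
    by linarith
qed

end
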